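(* Let $N\ge 1$, $l>0$, $\Delta\tau>0$, $L>(N+1)l$ and $v_{0,\min}\le v_{0,\max}$, and consider the platoon system with state $y=(\tilde x_1,\tilde v_1,\dots,\tilde x_N,\tilde v_N,v_0)\in\mathbb{R}^{2N+1}$, input $u=(u_0,\dots,u_N)\in\mathbb{U}$ and disturbance $w\in\mathbb{W}$: $$\tilde x_i^+=\tilde x_i+\tilde v_i\Delta\tau+(u_0-u_i)\tfrac{\Delta\tau^2}{2}+w_{0,x}-w_{i,x},\quad \tilde v_i^+=\tilde v_i+(u_0-u_i)\Delta\tau+w_{0,v}-w_{i,v}\ (i=1,\dots,N),\quad v_0^+=v_0+u_0\Delta\tau+w_{0,v}.$$ Let $\Omega_0,\dots,\Omega_N$, $I_0,\dots,I_N$, $J_{i,x},J_{i,v}$ be as in the context, and let $\mu_i:\Omega_i\to I_i$ ($i=1,\dots,N$) and $\mu_0:\Omega_0\to I_0$ be invariance-inducing maps as defined in the context. Define, on $\Omega=\{y:(\tilde x_i,\tilde v_i)\in\Omega_i\ (i=1,\dots,N),\ v_0\in\Omega_0\}$, the feedback $u=\mu(y)$ by $u_0=\mu_0(v_0)$ and $u_i=\mu_0(v_0)-\mu_i(\tilde x_i,\tilde v_i)$ for $i=1,\dots,N$. Then $\mu(y)\in\mathbb{U}$ for all $y\in\Omega$, and for every initial state $y(0)\in\Omega$ and every disturbance sequence $(w(k))_{k\ge0}$ with $w(k)\in\mathbb{W}$, the closed-loop trajectory $y(k+1)=$ (platoon update with $u=\mu(y(k))$, $w=w(k)$) satisfies,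 for all $k\ge 0$: $\tilde x_i(k)\ge\tilde x_{i-1}(k)+l$ for $i=1,\dots,N$ (with $\tilde x_0:=0$), $\tilde x_N(k)\le L$, and $v_0(k)\in[v_{0,\min},v_{0,\max}]$. That is, $\mu$ solves the safe platoon control problem (belongs to the set $\mathbb{M}$ of control policies guaranteeing these constraints for all times and all admissible disturbances).
   Context: A platoon consists of $N+1$ vehicles indexed $0$ (the leader) to $N$, all of length $l$. Vehicle $i$ has absolute position $x_i$, velocity $v_i$, control input $u_i$ and additive disturbances $w_{i,x},w_{i,v}$, with dynamics $x_i^+=x_i+v_i\Delta\tau+u_i\frac{\Delta\tau^2}{2}+w_{i,x}$, $v_i^+=v_i+u_i\Delta\tau+w_{i,v}$. Admissible inputs: $\mathbb{U}=\prod_{i=0}^N[u_{i,\min},u_{i,\max}]$; admissible disturbances: $w=(w_{i,s})\in\mathbb{W}=\prod_{i=0}^N[w_{i,x,\min},w_{i,x,\max}]\times[w_{i,v,\min},w_{i,v,\max}]$. Relative coordinates are $\tilde x_i=x_0-x_i$, $\tilde v_i=v_0-v_i$. Envelope sets: for $i=1,\dots,N$, $\mathbb{S}_i=\{(\tilde x_i,\tilde v_i)\in\mathbb{R}^2 : il+(i-1)\frac{L-Nl}{N}\le\tilde x_i\le il+i\frac{L-Nl}{N}\}$, and $\mathbb{S}_0=[v_{0,\min},v_{0,\max}]$. Relative inputs and disturbances: $\tilde u_0=u_0$, $\tilde u_i=u_0-u_i$, $\tilde w_{0,s}=w_{0,s}$, $\tilde w_{i,s}=w_{0,s}-w_{i,s}$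 ($s=x,v$). Let $\mathcal{U}=\{\tilde u:u\in\mathbb{U}\}$, $\mathcal{W}=\{\tilde w:w\in\mathbb{W}\}$. $\prod_{i=0}^N I_i$ is any hyper-rectangle contained in $\mathcal{U}$, and $\prod_{i=0}^N J_{i,x}\times J_{i,v}$ is any hyper-rectangle containing $\mathcal{W}$. For $i=1,\dots,N$, $\Omega_i\subseteq\mathbb{S}_i$, and $\mu_i:\Omega_i\to I_i$ satisfies: for every $(\tilde x,\tilde v)\in\Omega_i$, with $\tilde u=\mu_i(\tilde x,\tilde v)$, one has $(\tilde x+\tilde v\Delta\tau+\tilde u\frac{\Delta\tau^2}{2}+\omega_x,\ \tilde v+\tilde u\Delta\tau+\omega_v)\in\Omega_i$ for all $\omega_x\in J_{i,x}$, $\omega_v\in J_{i,v}$. Also $\Omega_0\subseteq\mathbb{S}_0$ and $\mu_0:\Omega_0\to I_0$ satisfies $v+\mu_0(v)\Delta\tau+\omega\in\Omega_0$ for all $v\in\Omega_0$ and all $\omega\in[w_{0,v,\min},w_{0,v,\max}]$. *)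

theory Defs
  imports "HOL-Analysis.Analysis"
begin

text \<open>Vectors indexed by {0..N} are represented as functions nat => real;
  only indices 0..N (resp. 1..N) are meaningful.\<close>

definition envelope :: "nat \<Rightarrow> real \<Rightarrow> real \<Rightarrow> nat \<Rightarrow> (real \<times> real) set" where
  "envelope N l L i = {(x, v). real i * l + (real i - 1) * ((L - real N * l) / real N) \<le> x
                          \<and> x \<le> real i * l + real i * ((L - real N * l) / real N)}"

definition admU :: "nat \<Rightarrow> (nat \<Rightarrow> real) \<Rightarrow> (nat \<Rightarrow> real) \<Rightarrow> (nat \<Rightarrow> real) set" where
  "admU N umin umax = {u. \<forall>i\<le>N. umin i \<le> u i \<and> u i \<le> umax i}"

definition relU :: "nat \<Rightarrow> (nat \<Rightarrow> real) \<Rightarrow> (nat \<Rightarrow> real) \<Rightarrow> (nat \<Rightarrow> real) set" where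
  "relU N umin umax = {ut. \<exists>u \<in> admU N umin umax. ut 0 = u 0 \<and> (\<forall>i\<in>{1..N}. ut i = u 0 - u i)}"

definition admW :: "nat \<Rightarrow> (nat \<Rightarrow> real) \<Rightarrow> (nat \<Rightarrow> real) \<Rightarrow> (nat \<Rightarrow> real) \<Rightarrow> (nat \<Rightarrow> real)
                     \<Rightarrow> ((nat \<Rightarrow> real) \<times> (nat \<Rightarrow> real)) set" where
  "admW N wxmin wxmax wvmin wvmax = {(wx, wv). \<forall>i\<le>N. wxmin i \<le> wx i \<and> wx i \<le> wxmax i
                                             \<and> wvmin i \<le> wv i \<and> wv i \<le> wvmax i}"

definition relW :: "nat \<Rightarrow> (nat \<Rightarrow> real) \<Rightarrow> (nat \<Rightarrow> real) \<Rightarrow> (nat \<Rightarrow> real) \<Rightarrow> (nat \<Rightarrow> real)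
                     \<Rightarrow> ((nat \<Rightarrow> real) \<times> (nat \<Rightarrow> real)) set" where
  "relW N wxmin wxmax wvmin wvmax = {(wxt, wvt). \<exists>(wx, wv) \<in> admW N wxmin wxmax wvmin wvmax.
        wxt 0 = wx 0 \<and> wvt 0 = wv 0 \<and>
        (\<forall>i\<in>{1..N}. wxt i = wx 0 - wx i \<and> wvt i = wv 0 - wv i)}"

definition feedback :: "(real \<Rightarrow> real) \<Rightarrow> (nat \<Rightarrow> real \<Rightarrow> real \<Rightarrow> real)
                        \<Rightarrow> (nat \<Rightarrow> real) \<Rightarrow> (nat \<Rightarrow> real) \<Rightarrow> real \<Rightarrow> nat \<Rightarrow> real" where
  "feedback mu0 mu xt vt v0 i = (if i = 0 then mu0 v0 else mu0 v0 - mu i (xt i) (vt i))"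

end

theory Submission
  imports Defs
begin

text \<open>The feedback decouples the closed loop: in relative coordinates follower i is driven
  by mu i alone and the leader's speed by mu0 alone, so each invariance hypothesis keeps its
  own component of the state in \<open>Om i\<close> for ever. These sets lie in the envelopes,
  consecutive slabs of width \<open>(L - N l)/N\<close> separated by gaps of length l, whence the
  spacing and length constraints. The input is admissible because the box of the \<open>I i\<close>
  lies in the set of relative inputs.\<close>

lemma feedback_in_admU:
  assumes box: "\<forall>ut. (\<forall>i\<le>N. ut i \<in> I i) \<longrightarrow> ut \<in> relU N umin umax"
    and leader: "mu0 v0 \<in> I 0"
    and followers: "\<forall>i\<in>{1..N}. mu i (xt i) (vt i) \<in> I i"
  shows "feedback mu0 mu xt vt v0 \<in> admU N umin umax"
proof -
  define ut where "ut i = (if i = 0 then mu0 v0 else mu i (xt i) (vt i))" for i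
  have "ut \<in> relU N umin umax"
    using box leader followers by (force simp: ut_def)
  then obtain u where u: "u \<in> admU N umin umax" "ut 0 = u 0" "\<forall>i\<in>{1..N}. ut i = u 0 - u i"
    unfolding relU_def by blast
  have "feedback mu0 mu xt vt v0 i = u i" if "i \<le> N" for i
    using that u(2,3) by (cases "i = 0") (auto simp: ut_def feedback_def)
  with u(1) show ?thesis
    by (simp add: admU_def)
qed

lemma relative_disturbance_in_relW:
  assumes "(wx, wv) \<in> admW N wxmin wxmax wvmin wvmax"
  shows "((\<lambda>i. if i = 0 then wx 0 else wx 0 - wx i), (\<lambda>i. if i = 0 then wv 0 else wv 0 - wv i))
           \<in> relW N wxmin wxmax wvmin wvmax"
  using assms unfolding relW_def by auto

lemma relative_disturbance_in_J:
  assumes hJ: "\<forall>(wxt, wvt) \<in> relW N wxmin wxmax wvmin wvmax. \<forall>i\<le>N. wxt i \<in> Jx i \<and> wvt i \<in> Jv i"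
    and w: "(wx, wv) \<in> admW N wxmin wxmax wvmin wvmax"
    and i: "i \<in> {1..N}"
  shows "wx 0 - wx i \<in> Jx i" and "wv 0 - wv i \<in> Jv i"
  using hJ relative_disturbance_in_relW[OF w] i by fastforce+

lemma envelope_spacing:
  assumes "(x, v) \<in> envelope N l L i" and "(x', v') \<in> envelope N l L (Suc i)"
  shows "x + l \<le> x'"
proof -
  define d where "d = (L - real N * l) / real N"
  have "x \<le> real i * l + real i * d" and "real (Suc i) * l + (real (Suc i) - 1) * d \<le> x'"
    using assms unfolding envelope_def d_def by auto
  then show ?thesis by (simp add: algebra_simps)
qed

lemma envelope_first_lower:
  "(x, v) \<in> envelope N l L 1 \<Longrightarrow> l \<le> x"
  by (simp add: envelope_def)

lemma envelope_last_upper: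
  "N \<noteq> 0 \<Longrightarrow> (x, v) \<in> envelope N l L N \<Longrightarrow> x \<le> L"
  by (simp add: envelope_def)

lemma envelopes_imply_spacing:
  assumes N: "N \<ge> 1" and env: "\<forall>i\<in>{1..N}. (x i, v i) \<in> envelope N l L i"
  shows "(\<forall>i\<in>{1..N}. x i \<ge> (if i = 1 then 0 else x (i - 1)) + l) \<and> x N \<le> L"
proof (intro conjI ballI)
  fix i assume i: "i \<in> {1..N}"
  show "x i \<ge> (if i = 1 then 0 else x (i - 1)) + l"
  proof (cases "i = 1")
    case True
    then have "(x 1, v 1) \<in> envelope N l L 1" using env i by simp
    then show ?thesis using True envelope_first_lower by simp
  next
    case False
    then have "i - 1 \<in> {1..N}" and "Suc (i - 1) = i" using i by auto
    then have "(x (i - 1), v (i - 1)) \<in> envelope N l L (i - 1)"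
      and "(x i, v i) \<in> envelope N l L (Suc (i - 1))" using env i by simp_all
    then have "x (i - 1) + l \<le> x i" by (rule envelope_spacing)
    then show ?thesis using False by simp
  qed
next
  show "x N \<le> L" using N env envelope_last_upper[of N "x N" "v N" l L] by simp
qed

lemma relative_closed_loop_in_Omega:
  assumes hJ: "\<forall>(wxt, wvt) \<in> relW N wxmin wxmax wvmin wvmax. \<forall>i\<le>N. wxt i \<in> Jx i \<and> wvt i \<in> Jv i"
    and hmu: "\<forall>i\<in>{1..N}. \<forall>(x, v) \<in> Om i. mu i x v \<in> I i \<and>
                (\<forall>ox \<in> Jx i. \<forall>ov \<in> Jv i.
                   (x + v * dt + mu i x v * dt\<^sup>2 / 2 + ox, v + mu i x v * dt + ov) \<in> Om i)"
    and hmu0: "\<forall>v \<in> Om0. mu0 v \<in> I 0 \<and> (\<forall>w \<in> {wvmin 0..wvmax 0}. v + mu0 v * dt + w \<in> Om0)"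
    and init: "\<forall>i\<in>{1..N}. (X 0 i, V 0 i) \<in> Om i" "S 0 \<in> Om0"
    and w: "\<And>k. (wx k, wv k) \<in> admW N wxmin wxmax wvmin wvmax"
    and follower: "\<And>k i. i \<in> {1..N} \<Longrightarrow>
            X (Suc k) i = X k i + V k i * dt + mu i (X k i) (V k i) * dt\<^sup>2 / 2 + (wx k 0 - wx k i)
          \<and> V (Suc k) i = V k i + mu i (X k i) (V k i) * dt + (wv k 0 - wv k i)"
    and leader: "\<And>k. S (Suc k) = S k + mu0 (S k) * dt + wv k 0"
  shows "(\<forall>i\<in>{1..N}. (X k i, V k i) \<in> Om i) \<and> S k \<in> Om0"
proof (induction k)
  case 0
  show ?case using init by blast
next
  case (Suc k)
  have "(X (Suc k) i, V (Suc k) i) \<in> Om i" if i: "i \<in> {1..N}" for i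
  proof -
    have "(x + v * dt + mu i x v * dt\<^sup>2 / 2 + ox, v + mu i x v * dt + ov) \<in> Om i"
      if "(x, v) \<in> Om i" "ox \<in> Jx i" "ov \<in> Jv i" for x v ox ov
      using hmu i that by blast
    moreover have "(X k i, V k i) \<in> Om i" using Suc.IH i by blast
    ultimately show ?thesis
      using relative_disturbance_in_J[OF hJ w i] follower[OF i] by simp
  qed
  moreover have "wv k 0 \<in> {wvmin 0..wvmax 0}"
    using w by (simp add: admW_def)
  then have "S (Suc k) \<in> Om0"
    using hmu0 Suc.IH leader by simp
  ultimately show ?case by blast
qed

theorem proposition3:
  fixes N :: nat and l dt L v0min v0max :: real
    and umin umax wxmin wxmax wvmin wvmax :: "nat \<Rightarrow> real"
    and I Jx Jv :: "nat \<Rightarrow> real set"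
    and Om :: "nat \<Rightarrow> (real \<times> real) set" and Om0 :: "real set"
    and mu :: "nat \<Rightarrow> real \<Rightarrow> real \<Rightarrow> real" and mu0 :: "real \<Rightarrow> real"
  assumes hN: "N \<ge> 1" and hl: "l > 0" and hdt: "dt > 0"
    and hL: "L > (real N + 1) * l" and hv0: "v0min \<le> v0max"
    and hI_int: "\<forall>i\<le>N. is_interval (I i)"
    and hI: "\<forall>ut. (\<forall>i\<le>N. ut i \<in> I i) \<longrightarrow> ut \<in> relU N umin umax"
    and hJ_int: "\<forall>i\<le>N. is_interval (Jx i) \<and> is_interval (Jv i)"
    and hJ: "\<forall>(wxt, wvt) \<in> relW N wxmin wxmax wvmin wvmax. \<forall>i\<le>N. wxt i \<in> Jx i \<and> wvt i \<in> Jv i"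
    and hOm: "\<forall>i\<in>{1..N}. Om i \<subseteq> envelope N l L i"
    and hmu: "\<forall>i\<in>{1..N}. \<forall>(x, v) \<in> Om i. mu i x v \<in> I i \<and>
                (\<forall>ox \<in> Jx i. \<forall>ov \<in> Jv i.
                   (x + v * dt + mu i x v * dt\<^sup>2 / 2 + ox, v + mu i x v * dt + ov) \<in> Om i)"
    and hOm0: "Om0 \<subseteq> {v0min..v0max}"
    and hmu0: "\<forall>v \<in> Om0. mu0 v \<in> I 0 \<and>
                (\<forall>w \<in> {wvmin 0..wvmax 0}. v + mu0 v * dt + w \<in> Om0)"
  shows "(\<forall>xt vt v0. (\<forall>i\<in>{1..N}. (xt i, vt i) \<in> Om i) \<and> v0 \<in> Om0 \<longrightarrow>
            feedback mu0 mu xt vt v0 \<in> admU N umin umax)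
     \<and> (\<forall>(X :: nat \<Rightarrow> nat \<Rightarrow> real) (V :: nat \<Rightarrow> nat \<Rightarrow> real) (V0 :: nat \<Rightarrow> real)
           (wx :: nat \<Rightarrow> nat \<Rightarrow> real) (wv :: nat \<Rightarrow> nat \<Rightarrow> real).
          (\<forall>i\<in>{1..N}. (X 0 i, V 0 i) \<in> Om i) \<and> V0 0 \<in> Om0
          \<and> (\<forall>k. (wx k, wv k) \<in> admW N wxmin wxmax wvmin wvmax)
          \<and> (\<forall>k. \<forall>i\<in>{1..N}.
               X (Suc k) i = X k i + V k i * dt
                   + (feedback mu0 mu (X k) (V k) (V0 k) 0 - feedback mu0 mu (X k) (V k) (V0 k) i) * dt\<^sup>2 / 2
                   + wx k 0 - wx k i
             \<and> V (Suc k) i = V k i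
                   + (feedback mu0 mu (X k) (V k) (V0 k) 0 - feedback mu0 mu (X k) (V k) (V0 k) i) * dt
                   + wv k 0 - wv k i)
          \<and> (\<forall>k. V0 (Suc k) = V0 k + feedback mu0 mu (X k) (V k) (V0 k) 0 * dt + wv k 0)
          \<longrightarrow> (\<forall>k. (\<forall>i\<in>{1..N}. X k i \<ge> (if i = 1 then 0 else X k (i - 1)) + l)
                   \<and> X k N \<le> L \<and> v0min \<le> V0 k \<and> V0 k \<le> v0max))"
proof ((rule conjI; intro allI impI; elim conjE), goal_cases)
  case (1 xt vt v0)
  have "mu i x v \<in> I i" if "i \<in> {1..N}" "(x, v) \<in> Om i" for i x v
    using hmu that by blast
  with 1(1) have "\<forall>i\<in>{1..N}. mu i (xt i) (vt i) \<in> I i"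
    by blast
  moreover have "mu0 v0 \<in> I 0"
    using hmu0 1(2) by blast
  ultimately show ?case
    using feedback_in_admU[OF hI] by blast
next
  case (2 X V V0 wx wv k)
  note dynamics = 2(4)[rule_format] and leader = 2(5)[rule_format]
  have "X (Suc k) i = X k i + V k i * dt + mu i (X k i) (V k i) * dt\<^sup>2 / 2 + (wx k 0 - wx k i)
      \<and> V (Suc k) i = V k i + mu i (X k i) (V k i) * dt + (wv k 0 - wv k i)"
    if "i \<in> {1..N}" for k i
    using dynamics[OF that, of k] that by (simp add: feedback_def)
  moreover have "V0 (Suc k) = V0 k + mu0 (V0 k) * dt + wv k 0" for k
    using leader[of k] by (simp add: feedback_def)
  ultimately have in_Omega: "(\<forall>i\<in>{1..N}. (X k i, V k i) \<in> Om i) \<and> V0 k \<in> Om0"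
    by (rule relative_closed_loop_in_Omega[where X = X and V = V and S = V0,
          OF hJ hmu hmu0 2(1,2) 2(3)[rule_format]])
  then have "\<forall>i\<in>{1..N}. (X k i, V k i) \<in> envelope N l L i"
    using hOm by blast
  moreover have "V0 k \<in> {v0min..v0max}"
    using in_Omega hOm0 by blast
  ultimately show ?case
    using envelopes_imply_spacing[OF hN] by simp
qed

end
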